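(* Let $N\ge16$ be an integer and $\rho\in[2/3,1)$. Then for every $k\ge0$, $1\le j\le 2^k$ and every $y\in L^k_j$, $$H_\flat\widehat\omega(y)=\int K_\flat(y-x)\,d\widehat\omega(x)=0$$ (the integral being absolutely convergent since $y$ has positive distance from $\mathsf E^{(N)}$). In particular $H_\flat\widehat\omega(\dot z^k_j)=0$ for all $k,j$.
   Context: Cantor intervals: fix an integer $N\ge16$ and $\rho\in[2/3,1)$. Set $I^0_1=[0,1]$. Each interval $I=[a,a+N^{-k}]$ of generation $k$ has two children of generation $k+1$: the left child $I_-=[a,a+N^{-k-1}]$ and the right child $I_+=[a+N^{-k}-N^{-k-1},a+N^{-k}]$. The $2^k$ intervals of generation $k$ are denoted $I^k_j$, $1\le j\le 2^k$, numbered left to right; $\mathcal D$ is the collection of all of them. $G^k_j$ is the open middle gap $I^k_j\setminus((I^k_j)_-\cup(I^k_j)_+)$, $\dot z^k_j$ is the common center of $I^k_j$ and $G^k_j$, and $L^k_j=[\dot z^k_j-N^{-k-1},\dot z^k_j+N^{-k-1}]$. The Cantor set is $\mathsf E^{(N)}=\bigcap_{k}\bigcup_{j}I^k_j$. Redistributed Cantor measure: with $\eta=1/N$, $\widehat\omega$ is the unique Borel probability measure supported on $\mathsf E^{(N)}$ such that $\widehat\omega(I^1_1)=\widehat\omega(I^1_2)=\frac12$ and for every $I\in\mathcal D$ of generation $\ge1$: if $I$ is the left child of its parent then $\widehat\omega(I_-)=\frac{1+\eta}2\widehat\omega(I)$, $\widehat\omega(I_+)=\frac{1-\eta}2\widehat\omega(I)$;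 if $I$ is the right child of its parent then $\widehat\omega(I_-)=\frac{1-\eta}2\widehat\omega(I)$, $\widehat\omega(I_+)=\frac{1+\eta}2\widehat\omega(I)$. Flattened kernel: $K_\flat$ is defined first on $[N^{-1/2},N^{1/2}]$ as a smooth nonincreasing function with values in $[N^{-1/2},N^{1/2}]$ such that $K_\flat(x)=1/x$ for $N^{-1/2}\le x\le(\rho N)^{-1/2}$ and for $(\rho N)^{1/2}\le x\le N^{1/2}$, and $K_\flat(x)=1$ for $(\rho^2N)^{-1/2}\le x\le(\rho^2N)^{1/2}$; then extended to $(0,\infty)$ by $K_\flat(x)=N^{-k}K_\flat(N^{-k}x)$ for $x\in[N^{k-1/2},N^{k+1/2}]$, $k\in\mathbb Z$, and to $\mathbb R\setminus\{0\}$ as an odd function. $H_\flat\mu(x)=\int K_\flat(x-y)\,d\mu(y)$. *)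

theory Defs
  imports "HOL-Probability.Probability"
begin

text \<open>Generation k, index j with 1 \<le> j \<le> 2^k, numbered left to right.
  The children of I k j are I (k+1) (2j-1) (left child) and I (k+1) (2j) (right child).
  cantor_left N k j is the left endpoint of I k j.\<close>

fun cantor_left :: "nat \<Rightarrow> nat \<Rightarrow> nat \<Rightarrow> real" where
  "cantor_left N 0 j = 0"
| "cantor_left N (Suc k) j =
     cantor_left N k ((j + 1) div 2)
     + (if even j then (1 / real N) ^ k - (1 / real N) ^ Suc k else 0)"

definition cantor_int :: "nat \<Rightarrow> nat \<Rightarrow> nat \<Rightarrow> real set" where
  "cantor_int N k j = {cantor_left N k j .. cantor_left N k j + (1 / real N) ^ k}"

definition cantor_center :: "nat \<Rightarrow> nat \<Rightarrow> nat \<Rightarrow> real" where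
  "cantor_center N k j = cantor_left N k j + (1 / real N) ^ k / 2"

definition cantor_L :: "nat \<Rightarrow> nat \<Rightarrow> nat \<Rightarrow> real set" where
  "cantor_L N k j = {cantor_center N k j - (1 / real N) ^ Suc k ..
                     cantor_center N k j + (1 / real N) ^ Suc k}"

definition cantor_set :: "nat \<Rightarrow> real set" where
  "cantor_set N = (\<Inter>k. \<Union>j\<in>{1..2^k}. cantor_int N k j)"

text \<open>The redistributed Cantor measure (eta = 1/N): a Borel probability measure
  supported on the Cantor set with the prescribed masses.\<close>
definition redistributed_cantor_measure :: "nat \<Rightarrow> real measure \<Rightarrow> bool" where
  "redistributed_cantor_measure N M \<longleftrightarrow>
     sets M = sets borel \<and> prob_space M \<and>
     emeasure M (UNIV - cantor_set N) = 0 \<and>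
     measure M (cantor_int N 1 1) = 1/2 \<and> measure M (cantor_int N 1 2) = 1/2 \<and>
     (\<forall>k\<ge>1. \<forall>j\<in>{1..2^k}.
        (odd j \<longrightarrow>
           measure M (cantor_int N (Suc k) (2*j - 1)) = (1 + 1/real N) / 2 * measure M (cantor_int N k j) \<and>
           measure M (cantor_int N (Suc k) (2*j)) = (1 - 1/real N) / 2 * measure M (cantor_int N k j)) \<and>
        (even j \<longrightarrow>
           measure M (cantor_int N (Suc k) (2*j - 1)) = (1 - 1/real N) / 2 * measure M (cantor_int N k j) \<and>
           measure M (cantor_int N (Suc k) (2*j)) = (1 + 1/real N) / 2 * measure M (cantor_int N k j)))"

text \<open>Smoothness of the restriction to the closed
  interval [N^(-1/2), N^(1/2)] is expressed by infinite differentiability on the open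
  interval; near both endpoints K is 1/x anyway.\<close>
definition flat_kernel :: "nat \<Rightarrow> real \<Rightarrow> (real \<Rightarrow> real) \<Rightarrow> bool" where
  "flat_kernel N \<rho> K \<longleftrightarrow>
     (\<forall>n. \<forall>x\<in>{real N powr (-1/2) <..< real N powr (1/2)}. (deriv ^^ n) K differentiable (at x)) \<and>
     (\<forall>x\<in>{real N powr (-1/2) .. real N powr (1/2)}. \<forall>x'\<in>{real N powr (-1/2) .. real N powr (1/2)}.
         x \<le> x' \<longrightarrow> K x' \<le> K x) \<and>
     (\<forall>x\<in>{real N powr (-1/2) .. real N powr (1/2)}.
         K x \<in> {real N powr (-1/2) .. real N powr (1/2)}) \<and>
     (\<forall>x\<in>{real N powr (-1/2) .. (\<rho> * real N) powr (-1/2)}. K x = 1 / x) \<and>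
     (\<forall>x\<in>{(\<rho> * real N) powr (1/2) .. real N powr (1/2)}. K x = 1 / x) \<and>
     (\<forall>x\<in>{(\<rho>^2 * real N) powr (-1/2) .. (\<rho>^2 * real N) powr (1/2)}. K x = 1) \<and>
     (\<forall>k::int. \<forall>x\<in>{real N powr (real_of_int k - 1/2) .. real N powr (real_of_int k + 1/2)}.
         K x = real N powr (- real_of_int k) * K (real N powr (- real_of_int k) * x)) \<and>
     (\<forall>x. x \<noteq> 0 \<longrightarrow> K (- x) = - K x)"

definition H_flat :: "(real \<Rightarrow> real) \<Rightarrow> real measure \<Rightarrow> real \<Rightarrow> real" where
  "H_flat K \<mu> y = (\<integral>x. K (y - x) \<partial>\<mu>)"

end

theory Submission
  imports Defs
begin

text \<open>For \<open>y \<in> L k j\<close> the kernel \<open>K (y - x)\<close> equals \<open>\<plusminus>N^k\<close> on the left/right child of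
  \<open>I k j\<close>, and for \<open>x\<close> in the Cantor set outside \<open>I k j\<close> it does not depend on where \<open>y\<close>
  lies in \<open>I k j\<close>. So moving the evaluation point from the centre of \<open>I k p\<close> into
  \<open>L (k+1) i\<close>, for a child \<open>i\<close> of sign \<open>s = \<plusminus>1\<close>, changes the integrand only on the two
  children of \<open>I (k+1) i\<close>, by \<open>N^(k+1) - s N^k\<close> and \<open>-N^(k+1) - s N^k\<close>. The redistributed
  masses \<open>(1 \<plusminus> s/N)/2\<close> of these children make the change integrate to zero, and induction on
  \<open>k\<close> starts from \<open>1/2 - 1/2 = 0\<close>.\<close>

section \<open>Cantor intervals\<close>

lemma cantor_left_odd_child:
  "1 \<le> j \<Longrightarrow> cantor_left N (Suc k) (2*j - 1) = cantor_left N k j"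
proof -
  assume "1 \<le> j"
  then have "(2*j - 1 + 1) div 2 = j" "odd (2*j - 1)" by auto
  then show ?thesis by simp
qed

lemma cantor_left_even_child:
  "cantor_left N (Suc k) (2*j) = cantor_left N k j + (1/real N)^k - (1/real N)^Suc k"
  by simp

lemma cantor_int_Suc_subset: "cantor_int N (Suc k) i \<subseteq> cantor_int N k ((i + 1) div 2)"
proof -
  have "1/real N \<le> 1" by (cases "N = 0") auto
  then have "(1/real N)^Suc k \<le> (1/real N)^k" by (intro power_decreasing) auto
  then show ?thesis unfolding cantor_int_def by auto
qed

lemma cantor_int_children_subset:
  assumes "1 \<le> j"
  shows "cantor_int N (Suc k) (2*j - 1) \<subseteq> cantor_int N k j"
    and "cantor_int N (Suc k) (2*j) \<subseteq> cantor_int N k j"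
proof -
  have "(2*j - 1 + 1) div 2 = j" "(2*j + 1) div 2 = j" using assms by auto
  then show "cantor_int N (Suc k) (2*j - 1) \<subseteq> cantor_int N k j"
    and "cantor_int N (Suc k) (2*j) \<subseteq> cantor_int N k j"
    using cantor_int_Suc_subset[of N k "2*j - 1"] cantor_int_Suc_subset[of N k "2*j"] by auto
qed

lemma child_lengths_less:
  assumes "2 < N"
  shows "2 * (1/real N)^Suc k < (1/real N)^k"
  using assms by (simp add: field_simps)

lemma cantor_int_children_disjoint:
  assumes "2 < N" "1 \<le> j"
  shows "cantor_int N (Suc k) (2*j - 1) \<inter> cantor_int N (Suc k) (2*j) = {}"
  using child_lengths_less[OF assms(1), of k]
  unfolding cantor_int_def cantor_left_odd_child[OF assms(2)] cantor_left_even_child by auto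

lemma cantor_left_strict_order:
  assumes "2 < N" "1 \<le> j" "j < j'" "j' \<le> 2^k"
  shows "cantor_left N k j + (1/real N)^k < cantor_left N k j'"
  using assms(2-)
proof (induction k arbitrary: j j')
  case 0
  then show ?case by simp
next
  case (Suc k)
  define p p' where "p = (j + 1) div 2" and "p' = (j' + 1) div 2"
  have "p \<le> p'" "1 \<le> p" "p' \<le> 2^k"
    using Suc.prems unfolding p_def p'_def by (auto intro: div_le_mono)
  have "cantor_int N (Suc k) j \<subseteq> cantor_int N k p" "cantor_int N (Suc k) j' \<subseteq> cantor_int N k p'"
    unfolding p_def p'_def by (rule cantor_int_Suc_subset)+
  then have nested: "cantor_left N k p \<le> cantor_left N (Suc k) j"
      "cantor_left N (Suc k) j' + (1/real N)^Suc k \<le> cantor_left N k p' + (1/real N)^k"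
      "cantor_left N k p' \<le> cantor_left N (Suc k) j'"
      "cantor_left N (Suc k) j + (1/real N)^Suc k \<le> cantor_left N k p + (1/real N)^k"
    unfolding cantor_int_def by (auto simp: subset_iff)
  show ?case
  proof (cases "p = p'")
    case True
    then have "odd j" "even j'" "p = (j' + 1) div 2"
      using Suc.prems unfolding p_def p'_def by presburger+
    then show ?thesis
      using child_lengths_less[OF assms(1), of k] by (simp add: p_def)
  next
    case False
    with \<open>p \<le> p'\<close> Suc.IH[of p p'] \<open>1 \<le> p\<close> \<open>p' \<le> 2^k\<close> nested show ?thesis by force
  qed
qed

lemma cantor_int_unique:
  assumes "2 < N" "x \<in> cantor_int N k j" "x \<in> cantor_int N k j'"
    and "j \<in> {1..2^k}" "j' \<in> {1..2^k}"
  shows "j = j'"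
proof (rule ccontr)
  assume "j \<noteq> j'"
  then have "cantor_left N k j + (1/real N)^k < cantor_left N k j'
      \<or> cantor_left N k j' + (1/real N)^k < cantor_left N k j"
    using cantor_left_strict_order[OF assms(1)] assms(4,5) by (cases "j < j'") auto
  with assms(2,3) show False unfolding cantor_int_def by auto
qed

lemma cantor_set_in_child:
  assumes "2 < N" "x \<in> cantor_set N" "x \<in> cantor_int N k j" "j \<in> {1..2^k}"
  shows "x \<in> cantor_int N (Suc k) (2*j - 1) \<or> x \<in> cantor_int N (Suc k) (2*j)"
proof -
  obtain i where i: "i \<in> {1..2^Suc k}" "x \<in> cantor_int N (Suc k) i"
    using assms(2) unfolding cantor_set_def by blast
  have "x \<in> cantor_int N k ((i + 1) div 2)" "(i + 1) div 2 \<in> {1..2^k}"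
    using i cantor_int_Suc_subset by auto
  then have "(i + 1) div 2 = j"
    using cantor_int_unique[OF assms(1)] assms(3,4) by blast
  then have "i = 2*j - 1 \<or> i = 2*j" by presburger
  with i show ?thesis by auto
qed

lemma cantor_set_subset_unit: "cantor_set N \<subseteq> cantor_int N 0 1"
proof
  fix x assume "x \<in> cantor_set N"
  then have "\<exists>j\<in>{1..2^0}. x \<in> cantor_int N 0 j" unfolding cantor_set_def by blast
  then show "x \<in> cantor_int N 0 1" by simp
qed

lemma cantor_L_subset:
  assumes "2 \<le> N"
  shows "cantor_L N k j \<subseteq> cantor_int N k j"
proof -
  have "(1/real N)^Suc k \<le> (1/real N)^k / 2" using assms by (simp add: field_simps)
  then show ?thesis unfolding cantor_L_def cantor_center_def cantor_int_def
    by (auto simp del: power_Suc)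
qed

lemma cantor_center_in_L: "cantor_center N k j \<in> cantor_L N k j"
  unfolding cantor_L_def by simp

section \<open>The flattened kernel\<close>

lemma flat_kernel_antimono:
  assumes "flat_kernel N \<rho> K"
    and "x \<in> {real N powr (-1/2) .. real N powr (1/2)}" "x' \<in> {real N powr (-1/2) .. real N powr (1/2)}"
    and "x \<le> x'"
  shows "K x' \<le> K x"
  using assms unfolding flat_kernel_def by blast

lemma flat_kernel_one:
  "flat_kernel N \<rho> K \<Longrightarrow> x \<in> {(\<rho>^2 * real N) powr (-1/2) .. (\<rho>^2 * real N) powr (1/2)} \<Longrightarrow> K x = 1"
  unfolding flat_kernel_def by blast

lemma flat_kernel_scale:
  "flat_kernel N \<rho> K \<Longrightarrow> x \<in> {real N powr (real_of_int k - 1/2) .. real N powr (real_of_int k + 1/2)} \<Longrightarrow>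
    K x = real N powr (- real_of_int k) * K (real N powr (- real_of_int k) * x)"
  unfolding flat_kernel_def by blast

lemma flat_kernel_odd: "flat_kernel N \<rho> K \<Longrightarrow> x \<noteq> 0 \<Longrightarrow> K (- x) = - K x"
  unfolding flat_kernel_def by blast

lemma flat_kernel_scale_power:
  assumes "0 < N" "flat_kernel N \<rho> K"
    and "(1/real N)^m / sqrt (real N) \<le> x" "x \<le> (1/real N)^m * sqrt (real N)"
  shows "K x = real N ^ m * K (real N ^ m * x)"
proof -
  have base: "real N powr (- real m) = (1/real N)^m"
    using assms(1) by (simp add: powr_minus powr_realpow power_one_over inverse_eq_divide)
  have "real N powr (real_of_int (- int m) - 1/2) = real N powr (- real m) / real N powr (1/2)"
    "real N powr (real_of_int (- int m) + 1/2) = real N powr (- real m) * real N powr (1/2)"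
    by (simp_all add: powr_diff flip: powr_add)
  then have "real N powr (real_of_int (- int m) - 1/2) = (1/real N)^m / sqrt (real N)"
    "real N powr (real_of_int (- int m) + 1/2) = (1/real N)^m * sqrt (real N)"
    unfolding base by (simp_all add: powr_half_sqrt)
  then have "K x = real N powr real m * K (real N powr real m * x)"
    using flat_kernel_scale[OF assms(2), of x "- int m"] assms(3,4) by simp
  then show ?thesis
    using assms(1) by (simp add: powr_realpow)
qed

lemma flat_kernel_antimono_block:
  assumes "0 < N" "flat_kernel N \<rho> K"
    and "x \<in> {real N powr (real_of_int k - 1/2) .. real N powr (real_of_int k + 1/2)}"
    and "x' \<in> {real N powr (real_of_int k - 1/2) .. real N powr (real_of_int k + 1/2)}"
    and "x \<le> x'"
  shows "K x' \<le> K x"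
proof -
  define c where "c = real N powr (- real_of_int k)"
  have "c > 0" unfolding c_def using assms(1) by simp
  have rescale: "c * t \<in> {real N powr (-1/2) .. real N powr (1/2)}"
    if "t \<in> {real N powr (real_of_int k - 1/2) .. real N powr (real_of_int k + 1/2)}" for t
  proof -
    have "c * real N powr (real_of_int k - 1/2) = real N powr (-1/2)"
      "c * real N powr (real_of_int k + 1/2) = real N powr (1/2)"
      unfolding c_def by (simp_all flip: powr_add)
    moreover have "c * real N powr (real_of_int k - 1/2) \<le> c * t" "c * t \<le> c * real N powr (real_of_int k + 1/2)"
      using that \<open>c > 0\<close> by (auto intro: mult_left_mono)
    ultimately show ?thesis by simp
  qed
  have "K (c * x') \<le> K (c * x)"
    using flat_kernel_antimono[OF assms(2) rescale rescale] assms(3-5) \<open>c > 0\<close> by simp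
  with \<open>c > 0\<close> have "c * K (c * x') \<le> c * K (c * x)" by simp
  then show ?thesis
    using flat_kernel_scale[OF assms(2) assms(3)] flat_kernel_scale[OF assms(2) assms(4)]
    unfolding c_def by simp
qed

lemma powr_half_block_cover:
  fixes b y :: real
  assumes "1 < b" "0 < y"
  obtains k :: int where "y \<in> {b powr (real_of_int k - 1/2) .. b powr (real_of_int k + 1/2)}"
proof
  define k where "k = \<lfloor>log b y + 1/2\<rfloor>"
  have "real_of_int k - 1/2 \<le> log b y" "log b y \<le> real_of_int k + 1/2"
    unfolding k_def by linarith+
  then have "b powr (real_of_int k - 1/2) \<le> b powr (log b y)" "b powr (log b y) \<le> b powr (real_of_int k + 1/2)"
    using assms(1) by (auto intro: powr_mono)
  then show "y \<in> {b powr (real_of_int k - 1/2) .. b powr (real_of_int k + 1/2)}"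
    using assms by simp
qed

lemma borel_measurable_piecewise_antimono:
  fixes f :: "real \<Rightarrow> real" and C :: "real set set"
  assumes "countable C" "\<And>c. c \<in> C \<Longrightarrow> c \<in> sets borel"
    and "\<And>c x y. c \<in> C \<Longrightarrow> x \<in> c \<Longrightarrow> y \<in> c \<Longrightarrow> x \<le> y \<Longrightarrow> f y \<le> f x" "\<Union>C = UNIV"
  shows "f \<in> borel_measurable borel"
proof -
  have "(\<lambda>x. - f x) \<in> borel_measurable borel"
    using assms by (intro borel_measurable_piecewise_mono[of C]) (auto simp: mono_on_def)
  then have "(\<lambda>x. - (- f x)) \<in> borel_measurable borel" by measurable
  then show ?thesis by simp
qed

text \<open>The kernel is antitone on each block \<open>\<plusminus>[N^(k-1/2), N^(k+1/2)]\<close>, and these blocks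
  together with \<open>{0}\<close> cover the line.\<close>
lemma borel_measurable_flat_kernel:
  assumes "1 < N" "flat_kernel N \<rho> K"
  shows "K \<in> borel_measurable borel"
proof -
  define lo hi where "lo k = real N powr (real_of_int k - 1/2)" and "hi k = real N powr (real_of_int k + 1/2)"
    for k :: int
  define C where "C = range (\<lambda>k. {lo k .. hi k}) \<union> range (\<lambda>k. {- hi k .. - lo k}) \<union> {{0}}"
  have lo_pos: "0 < lo k" for k unfolding lo_def using assms(1) by simp
  show ?thesis
  proof (rule borel_measurable_piecewise_antimono[of C])
    show "\<Union>C = UNIV"
    proof (intro set_eqI iffI UNIV_I)
      fix x :: real
      consider "0 < x" | "x < 0" | "x = 0" by linarith
      then show "x \<in> \<Union>C"
      proof cases
        case 1
        then obtain k where "x \<in> {lo k .. hi k}"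
          using powr_half_block_cover[of "real N" x] assms(1) unfolding lo_def hi_def by auto
        then show ?thesis unfolding C_def by blast
      next
        case 2
        then obtain k where "- x \<in> {lo k .. hi k}"
          using powr_half_block_cover[of "real N" "- x"] assms(1) unfolding lo_def hi_def by auto
        then have "x \<in> {- hi k .. - lo k}" by auto
        then show ?thesis unfolding C_def by blast
      qed (auto simp: C_def)
    qed
  next
    fix c x y assume "c \<in> C" "x \<in> c" "y \<in> c" "x \<le> y"
    then consider k where "lo k \<le> x" "y \<le> hi k" | k where "- hi k \<le> x" "y \<le> - lo k" | "x = y"
      unfolding C_def by auto
    then show "K y \<le> K x"
    proof cases
      case (1 k)
      then show ?thesis
        using flat_kernel_antimono_block[OF _ assms(2), where k=k and x=x and x'=y] assms(1) \<open>x \<le> y\<close>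
        unfolding lo_def hi_def by auto
    next
      case (2 k)
      then have "K (- x) \<le> K (- y)"
        using flat_kernel_antimono_block[OF _ assms(2), where k=k and x="- y" and x'="- x"] assms(1) \<open>x \<le> y\<close>
        unfolding lo_def hi_def by auto
      moreover have "x \<noteq> 0" "y \<noteq> 0" using 2 lo_pos[of k] \<open>x \<le> y\<close> by auto
      ultimately show ?thesis using flat_kernel_odd[OF assms(2)] by fastforce
    qed simp
  qed (auto simp: C_def)
qed

section \<open>The redistributed Cantor measure\<close>

lemma (in finite_measure) integrable_AE_eq_add_indicators:
  fixes f h :: "'a \<Rightarrow> real"
  assumes "f \<in> borel_measurable M" "integrable M h" "A \<in> sets M" "B \<in> sets M"
    and "AE x in M. f x = h x + a * indicator A x + b * indicator B x"
  shows "integrable M f"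
    and "(\<integral>x. f x \<partial>M) = (\<integral>x. h x \<partial>M) + a * measure M A + b * measure M B"
proof -
  have ind: "integrable M (indicator A :: 'a \<Rightarrow> real)" "integrable M (indicator B :: 'a \<Rightarrow> real)"
    using assms(3,4) by (simp_all add: integrable_real_indicator less_top[symmetric])
  then have g: "integrable M (\<lambda>x. h x + a * indicator A x + b * indicator B x)"
    using assms(2) by auto
  then show "integrable M f"
    using integrable_cong_AE_imp[OF _ assms(1)] assms(5) by (simp add: eq_commute)
  have "(\<integral>x. f x \<partial>M) = (\<integral>x. h x + a * indicator A x + b * indicator B x \<partial>M)"
    using integral_cong_AE[OF assms(1) borel_measurable_integrable[OF g] assms(5)] .
  also have "\<dots> = (\<integral>x. h x \<partial>M) + a * measure M A + b * measure M B"
    using assms(2-4) ind by (simp add: Bochner_Integration.integral_add sets.Int_space_eq2)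
  finally show "(\<integral>x. f x \<partial>M) = (\<integral>x. h x \<partial>M) + a * measure M A + b * measure M B" .
qed

lemma cantor_set_borel: "cantor_set N \<in> sets borel"
  unfolding cantor_set_def cantor_int_def by auto

lemma redistributed_cantor_measure_AE:
  assumes "redistributed_cantor_measure N \<omega>"
  shows "AE x in \<omega>. x \<in> cantor_set N"
proof (rule AE_I')
  show "UNIV - cantor_set N \<in> null_sets \<omega>"
    using assms cantor_set_borel[of N] unfolding redistributed_cantor_measure_def by (auto simp: null_sets_def)
qed auto

definition child_sign :: "nat \<Rightarrow> real" where
  "child_sign i = (if odd i then 1 else -1)"

lemma redistributed_cantor_measure_children:
  assumes "redistributed_cantor_measure N \<omega>" "1 \<le> k" "j \<in> {1..2^k}"
  shows "measure \<omega> (cantor_int N (Suc k) (2*j - 1)) = (1 + child_sign j / real N) / 2 * measure \<omega> (cantor_int N k j)"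
    and "measure \<omega> (cantor_int N (Suc k) (2*j)) = (1 - child_sign j / real N) / 2 * measure \<omega> (cantor_int N k j)"
  using assms unfolding redistributed_cantor_measure_def child_sign_def by auto

section \<open>The kernel near a Cantor interval\<close>

locale cantor_flat_kernel =
  fixes N :: nat and \<rho> :: real and K :: "real \<Rightarrow> real"
  assumes N_ge: "16 \<le> N" and rho_ge: "2/3 \<le> \<rho>" and flat: "flat_kernel N \<rho> K"
begin

lemma N_gt_2: "2 < N"
  using N_ge by simp

text \<open>Rescaling by \<open>N^m\<close> moves \<open>x\<close> into \<open>[3/8, 1]\<close>, where \<open>K = 1\<close> because \<open>\<rho>^2 N \<ge> 64/9\<close>.\<close>
lemma kernel_eq_power:
  assumes "3/8 * (1/real N)^m \<le> x" "x \<le> (1/real N)^m"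
  shows "K x = real N ^ m"
proof -
  have N_pos: "0 < N" using N_ge by simp
  have sqrt_N: "4 \<le> sqrt (real N)" using N_ge by (simp add: real_le_rsqrt)
  have "(1/real N)^m / sqrt (real N) \<le> x" "x \<le> (1/real N)^m * sqrt (real N)"
  proof -
    have "1 / sqrt (real N) \<le> 3/8" using sqrt_N by (simp add: divide_le_eq)
    then have "(1/real N)^m * (1 / sqrt (real N)) \<le> (1/real N)^m * (3/8)"
      by (rule mult_left_mono) simp
    moreover have "(1/real N)^m * 1 \<le> (1/real N)^m * sqrt (real N)"
      using sqrt_N N_ge by (intro mult_left_mono) auto
    moreover have "(1/real N)^m / sqrt (real N) = (1/real N)^m * (1 / sqrt (real N))" by simp
    ultimately show "(1/real N)^m / sqrt (real N) \<le> x" "x \<le> (1/real N)^m * sqrt (real N)"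
      using assms by linarith+
  qed
  then have "K x = real N ^ m * K (real N ^ m * x)"
    by (rule flat_kernel_scale_power[OF N_pos flat])
  moreover have "3/8 \<le> real N ^ m * x" "real N ^ m * x \<le> 1"
    using mult_left_mono[OF assms(1), of "real N ^ m"] mult_left_mono[OF assms(2), of "real N ^ m"] N_pos
    by (simp_all add: algebra_simps power_one_over)
  moreover have "64/9 \<le> \<rho>^2 * real N"
  proof -
    have "(2/3)^2 * 16 \<le> \<rho>^2 * real N"
      using rho_ge N_ge by (intro mult_mono power_mono) auto
    then show ?thesis by (simp add: power2_eq_square)
  qed
  then have "(\<rho>^2 * real N) powr (-1/2) \<le> 3/8" "1 \<le> (\<rho>^2 * real N) powr (1/2)"
    using real_sqrt_le_mono[of "64/9" "\<rho>^2 * real N"]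
    by (auto simp: powr_minus_divide powr_half_sqrt real_sqrt_divide field_simps)
  ultimately show ?thesis using flat_kernel_one[OF flat, of "real N ^ m * x"] by simp
qed

lemma child_length_le: "(1/real N)^Suc k \<le> (1/real N)^k / 16"
  using N_ge by (simp add: field_simps)

lemma kernel_left_child:
  assumes "1 \<le> p" "x \<in> cantor_int N (Suc k) (2*p - 1)"
    and "y \<in> cantor_L N k p \<union> cantor_int N (Suc k) (2*p)"
  shows "K (y - x) = real N ^ k"
proof -
  have "cantor_left N k p \<le> x" "x \<le> cantor_left N k p + (1/real N)^Suc k"
    using assms(2) unfolding cantor_int_def cantor_left_odd_child[OF assms(1)] by auto
  moreover have "cantor_left N k p + (1/real N)^k / 2 - (1/real N)^Suc k \<le> y"
    "y \<le> cantor_left N k p + (1/real N)^k"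
    using assms(3) child_length_le[of k]
    unfolding cantor_L_def cantor_center_def cantor_int_def cantor_left_even_child
    by (auto simp del: power_Suc)
  ultimately have "3/8 * (1/real N)^k \<le> y - x" "y - x \<le> (1/real N)^k"
    using child_length_le[of k] by linarith+
  then show ?thesis by (rule kernel_eq_power)
qed

lemma kernel_right_child:
  assumes "1 \<le> p" "x \<in> cantor_int N (Suc k) (2*p)"
    and "y \<in> cantor_L N k p \<union> cantor_int N (Suc k) (2*p - 1)"
  shows "K (y - x) = - (real N ^ k)"
proof -
  have "cantor_left N k p + (1/real N)^k - (1/real N)^Suc k \<le> x" "x \<le> cantor_left N k p + (1/real N)^k"
    using assms(2) unfolding cantor_int_def cantor_left_even_child by (auto simp del: power_Suc)
  moreover have "cantor_left N k p \<le> y" "y \<le> cantor_left N k p + (1/real N)^k / 2 + (1/real N)^Suc k"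
    using assms(3) child_length_le[of k]
    unfolding cantor_L_def cantor_center_def cantor_int_def cantor_left_odd_child[OF assms(1)]
    by (auto simp del: power_Suc)
  ultimately have "3/8 * (1/real N)^k \<le> x - y" "x - y \<le> (1/real N)^k"
    using child_length_le[of k] by linarith+
  then have "K (x - y) = real N ^ k" by (rule kernel_eq_power)
  moreover have "x - y \<noteq> 0"
  proof -
    have "0 < (1/real N)^k" using N_ge by simp
    with \<open>3/8 * (1/real N)^k \<le> x - y\<close> show ?thesis by linarith
  qed
  ultimately show ?thesis using flat_kernel_odd[OF flat, of "x - y"] by simp
qed

lemma kernel_const_off_interval:
  assumes "j \<in> {1..2^k}" "x \<in> cantor_set N" "x \<notin> cantor_int N k j"
    and "y \<in> cantor_int N k j" "y' \<in> cantor_int N k j"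
  shows "K (y - x) = K (y' - x)"
  using assms
proof (induction k arbitrary: j y y')
  case 0
  then show ?case using cantor_set_subset_unit by auto
next
  case (Suc k)
  define p where "p = (j + 1) div 2"
  have p: "p \<in> {1..2^k}" and j: "j = 2*p - 1 \<or> j = 2*p"
    using Suc.prems(1) unfolding p_def by auto
  have y: "y \<in> cantor_int N k p" "y' \<in> cantor_int N k p"
    using Suc.prems(4,5) cantor_int_Suc_subset unfolding p_def by auto
  show ?case
  proof (cases "x \<in> cantor_int N k p")
    case False
    with Suc.IH[OF p Suc.prems(2) _ y] show ?thesis by blast
  next
    case True
    with cantor_set_in_child[OF N_gt_2 Suc.prems(2) _ p] j Suc.prems(3)
    consider "j = 2*p - 1" "x \<in> cantor_int N (Suc k) (2*p)" | "j = 2*p" "x \<in> cantor_int N (Suc k) (2*p - 1)"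
      by auto
    then show ?thesis
    proof cases
      case 1
      then show ?thesis using kernel_right_child[of p x k] p Suc.prems(4,5) by simp
    next
      case 2
      then show ?thesis using kernel_left_child[of p x k] p Suc.prems(4,5) by simp
    qed
  qed
qed

lemma kernel_center_child:
  assumes "1 \<le> p" "i \<in> {2*p - 1, 2*p}" "y \<in> cantor_L N k p" "x \<in> cantor_int N (Suc k) i"
  shows "K (y - x) = child_sign i * real N ^ k"
proof -
  have "odd (2*p - 1)" using assms(1) by presburger
  with assms kernel_left_child[of p x k y] kernel_right_child[of p x k y] show ?thesis
    unfolding child_sign_def by auto
qed

lemma kernel_eq_off_child:
  assumes "p \<in> {1..2^k}" "i \<in> {2*p - 1, 2*p}" "x \<in> cantor_set N"
    and "x \<notin> cantor_int N (Suc k) i" "y \<in> cantor_int N (Suc k) i"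
  shows "K (y - x) = K (cantor_center N k p - x)"
proof (cases "x \<in> cantor_int N k p")
  case False
  have "y \<in> cantor_int N k p"
    using assms(1,2,5) cantor_int_children_subset[of p N k] by auto
  moreover have "cantor_center N k p \<in> cantor_int N k p"
    using cantor_L_subset[of N k p] cantor_center_in_L N_ge by auto
  ultimately show ?thesis using kernel_const_off_interval[OF assms(1,3) False] by blast
next
  case True
  with cantor_set_in_child[OF N_gt_2 assms(3) _ assms(1)] assms(2,4)
  consider "i = 2*p - 1" "x \<in> cantor_int N (Suc k) (2*p)" | "i = 2*p" "x \<in> cantor_int N (Suc k) (2*p - 1)"
    by auto
  then show ?thesis
  proof cases
    case 1
    then show ?thesis
      using kernel_right_child[of p x k] assms(1,5) cantor_center_in_L[of N k p] by simp
  next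
    case 2
    then show ?thesis
      using kernel_left_child[of p x k] assms(1,5) cantor_center_in_L[of N k p] by simp
  qed
qed

lemma kernel_refine_step:
  assumes "p \<in> {1..2^k}" "i \<in> {2*p - 1, 2*p}" "y \<in> cantor_L N (Suc k) i" "x \<in> cantor_set N"
  shows "K (y - x) = K (cantor_center N k p - x)
    + (real N ^ Suc k - child_sign i * real N ^ k) * indicator (cantor_int N (Suc (Suc k)) (2*i - 1)) x
    + (- (real N ^ Suc k) - child_sign i * real N ^ k) * indicator (cantor_int N (Suc (Suc k)) (2*i)) x"
proof (cases "x \<in> cantor_int N (Suc k) i")
  case True
  have i: "i \<in> {1..2^Suc k}" using assms(1,2) by auto
  have center: "K (cantor_center N k p - x) = child_sign i * real N ^ k"
    using kernel_center_child[OF _ assms(2) cantor_center_in_L True] assms(1) by simp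
  have "odd (2*i - 1)" using i by presburger
  with kernel_center_child[of i "2*i - 1" y "Suc k" x] kernel_center_child[of i "2*i" y "Suc k" x]
  have grandchild: "x \<in> cantor_int N (Suc (Suc k)) (2*i - 1) \<Longrightarrow> K (y - x) = real N ^ Suc k"
    "x \<in> cantor_int N (Suc (Suc k)) (2*i) \<Longrightarrow> K (y - x) = - (real N ^ Suc k)"
    using i assms(3) unfolding child_sign_def by auto
  from cantor_set_in_child[OF N_gt_2 assms(4) True i] cantor_int_children_disjoint[OF N_gt_2, of i "Suc k"] i
  show ?thesis using center grandchild by (auto simp: indicator_def)
next
  case False
  have "1 \<le> i" using assms(1,2) by auto
  with False have "x \<notin> cantor_int N (Suc (Suc k)) (2*i - 1)" "x \<notin> cantor_int N (Suc (Suc k)) (2*i)"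
    using cantor_int_children_subset[of i N "Suc k"] by auto
  moreover have "y \<in> cantor_int N (Suc k) i" using assms(3) cantor_L_subset[of N] N_ge by auto
  ultimately show ?thesis using kernel_eq_off_child[OF assms(1,2,4) False] by simp
qed

end

locale redistributed_cantor_kernel = cantor_flat_kernel +
  fixes \<omega> :: "real measure"
  assumes redistributed: "redistributed_cantor_measure N \<omega>"
begin

sublocale prob_space \<omega>
  using redistributed unfolding redistributed_cantor_measure_def by simp

lemma sets_\<omega>: "sets \<omega> = sets borel"
  using redistributed unfolding redistributed_cantor_measure_def by simp

lemma cantor_int_sets: "cantor_int N k j \<in> sets \<omega>"
  unfolding sets_\<omega> cantor_int_def by simp

lemma borel_measurable_kernel_shift: "(\<lambda>x. K (z - x)) \<in> borel_measurable \<omega>"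
proof -
  have "K \<in> borel_measurable borel"
    using borel_measurable_flat_kernel[OF _ flat] N_ge by simp
  then have "(\<lambda>x. K (z - x)) \<in> borel_measurable borel"
    using measurable_compose[of "\<lambda>x. z - x" borel borel K] by simp
  then show ?thesis by (subst measurable_cong_sets[OF sets_\<omega> refl])
qed

lemma kernel_integral_base:
  assumes "y \<in> cantor_L N 0 1"
  shows "integrable \<omega> (\<lambda>x. K (y - x)) \<and> (\<integral>x. K (y - x) \<partial>\<omega>) = 0"
proof -
  have "AE x in \<omega>. K (y - x) = 0 + 1 * indicator (cantor_int N 1 1) x + (-1) * indicator (cantor_int N 1 2) x"
    using redistributed_cantor_measure_AE[OF redistributed]
  proof eventually_elim
    case (elim x)
    then have "x \<in> cantor_int N 1 1 \<or> x \<in> cantor_int N 1 2"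
      using cantor_set_in_child[OF N_gt_2 elim, of 0 1] cantor_set_subset_unit by auto
    then show ?case
      using kernel_center_child[of 1 1 y 0 x] kernel_center_child[of 1 2 y 0 x] assms
        cantor_int_children_disjoint[OF N_gt_2, of 1 0]
      by (auto simp: child_sign_def indicator_def)
  qed
  note integral = integrable_AE_eq_add_indicators[OF borel_measurable_kernel_shift integrable_zero
      cantor_int_sets cantor_int_sets this]
  have "measure \<omega> (cantor_int N 1 1) = 1/2" "measure \<omega> (cantor_int N 1 2) = 1/2"
    using redistributed unfolding redistributed_cantor_measure_def by auto
  with integral show ?thesis by simp
qed

lemma kernel_integral_step:
  assumes "p \<in> {1..2^k}" "i \<in> {2*p - 1, 2*p}" "y \<in> cantor_L N (Suc k) i"
    and center: "integrable \<omega> (\<lambda>x. K (cantor_center N k p - x))" "(\<integral>x. K (cantor_center N k p - x) \<partial>\<omega>) = 0"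
  shows "integrable \<omega> (\<lambda>x. K (y - x)) \<and> (\<integral>x. K (y - x) \<partial>\<omega>) = 0"
proof -
  define s where "s = child_sign i"
  define c\<^sub>1 c\<^sub>2 where "c\<^sub>1 = real N ^ Suc k - s * real N ^ k" and "c\<^sub>2 = - (real N ^ Suc k) - s * real N ^ k"
  have "AE x in \<omega>. K (y - x) = K (cantor_center N k p - x)
      + c\<^sub>1 * indicator (cantor_int N (Suc (Suc k)) (2*i - 1)) x + c\<^sub>2 * indicator (cantor_int N (Suc (Suc k)) (2*i)) x"
    using redistributed_cantor_measure_AE[OF redistributed]
    by eventually_elim (use kernel_refine_step[OF assms(1-3)] s_def c\<^sub>1_def c\<^sub>2_def in auto)
  note integral = integrable_AE_eq_add_indicators[OF borel_measurable_kernel_shift center(1)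
      cantor_int_sets cantor_int_sets this]
  define m where "m = measure \<omega> (cantor_int N (Suc k) i)"
  have "i \<in> {1..2^Suc k}" using assms(1,2) by auto
  then have "measure \<omega> (cantor_int N (Suc (Suc k)) (2*i - 1)) = (1 + s / real N) / 2 * m"
    "measure \<omega> (cantor_int N (Suc (Suc k)) (2*i)) = (1 - s / real N) / 2 * m"
    using redistributed_cantor_measure_children[OF redistributed] unfolding s_def m_def by auto
  with integral(2) center(2)
  have "(\<integral>x. K (y - x) \<partial>\<omega>) = (c\<^sub>1 * ((1 + s / real N) / 2) + c\<^sub>2 * ((1 - s / real N) / 2)) * m"
    by (simp add: distrib_right mult.assoc)
  moreover have "s = 1 \<or> s = -1" unfolding s_def child_sign_def by auto
  then have "c\<^sub>1 * ((1 + s / real N) / 2) + c\<^sub>2 * ((1 - s / real N) / 2) = 0"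
    unfolding c\<^sub>1_def c\<^sub>2_def using N_ge by (auto simp: field_simps)
  ultimately show ?thesis using integral(1) by simp
qed

lemma kernel_integral_zero:
  assumes "j \<in> {1..2^k}" "y \<in> cantor_L N k j"
  shows "integrable \<omega> (\<lambda>x. K (y - x)) \<and> (\<integral>x. K (y - x) \<partial>\<omega>) = 0"
  using assms
proof (induction k arbitrary: j y)
  case 0
  then show ?case using kernel_integral_base by simp
next
  case (Suc k)
  define p where "p = (j + 1) div 2"
  have p: "p \<in> {1..2^k}" and "j \<in> {2*p - 1, 2*p}"
    using Suc.prems(1) unfolding p_def by auto
  with Suc.IH[OF p cantor_center_in_L] Suc.prems(2) show ?case
    using kernel_integral_step by blast
qed

end

theorem mainTheorem3:
  fixes N :: nat and \<rho> :: real and K :: "real \<Rightarrow> real" and \<omega> :: "real measure"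
  assumes "N \<ge> 16" and "2/3 \<le> \<rho>" and "\<rho> < 1"
    and "flat_kernel N \<rho> K"
    and "redistributed_cantor_measure N \<omega>"
  shows "\<forall>k j. j \<in> {1..2^k} \<longrightarrow>
           (\<forall>y\<in>cantor_L N k j. integrable \<omega> (\<lambda>x. K (y - x)) \<and> H_flat K \<omega> y = 0)
           \<and> H_flat K \<omega> (cantor_center N k j) = 0"
proof -
  interpret redistributed_cantor_kernel N \<rho> K \<omega>
    using assms(1,2,4,5) by unfold_locales
  show ?thesis
    using kernel_integral_zero cantor_center_in_L unfolding H_flat_def by blast
qed

end
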